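(* Let $\vec\nu=(\nu_2,\dots,\nu_{N-1})$ and $\vec\xi=(\xi_2,\dots,\xi_{N-1})$ be irreducible sequences of ordinals $<\varepsilon_{\mathbb{K}+2}$. If $\vec\nu<_{lx}\vec\xi$, then $o(\vec\nu)<o(\vec\xi)$.
   Context: Fix an integer $N\ge3$ and let $\mathbb{K}$ be an infinite cardinal (in the paper, the least $\Pi^1_{N-2}$-indescribable cardinal). $\Lambda=\varepsilon_{\mathbb{K}+1}$, and $\varepsilon_{\mathbb{K}+2}$ is the next epsilon number. Every $0<\xi<\varepsilon_{\mathbb{K}+2}$ has a unique Cantor normal form $\xi=\Lambda^{\xi_m}a_m+\cdots+\Lambda^{\xi_0}a_0$ with $\xi_m>\cdots>\xi_0$ and $0<a_i<\Lambda$. For $\xi>1$: $he(\xi)=\xi_m$, $Tl(\xi)=\Lambda^{\xi_0}a_0$; $he(i)=Tl(i)=i$ for $i\in\{0,1\}$. $he^{(0)}(\xi)=\xi$, $he^{(j+1)}(\xi)=he(he^{(j)}(\xi))$. $\Lambda_0(\xi)=\xi$, $\Lambda_{j+1}(\xi)=\Lambda^{\Lambda_j(\xi)}$. $\vec\xi=(\xi_2,\dots,\xi_{N-1})$ is irreducible iff for all $2\le i<N-1$ and $j>0$ with $i+j\le N-1$: $\xi_i>0$ implies $Tl(\xi_i)\ge\Lambda_j(\xi_{i+j}+1)$. For irreducible $\vec\xi$, $o(\vec\xi)=\sum\{\Lambda_{i-1}(\xi_i+1):2\le i\le N-1,\ \xi_i\ne0\}$, the summands taken in order of increasing $i$ (left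 to right); $o(\vec 0)=0$. $<_{lx}$: for $\vec\nu\ne\vec\xi$ (both indexed $2,\dots,N-1$), let $i$ be least with $\nu_i\ne\xi_i$, suppose $(\xi_i,\dots,\xi_{N-1})$ is not all zero, and let $k_1\ge i$ be least with $\xi_{k_1}\ne0$. Then $\vec\nu<_{lx}\vec\xi$ iff either $(\nu_i,\dots,\nu_{N-1})$ is all zero, or, letting $k_0\ge i$ be least with $\nu_{k_0}\ne0$, one of: (a) $i=k_0<k_1$ and $he^{(k_1-i)}(\nu_i)\le\xi_{k_1}$; (b) $k_0\ge k_1=i$ and $\nu_{k_0}<he^{(k_0-i)}(\xi_i)$. (If $(\xi_i,\dots,\xi_{N-1})$ is all zero, $\vec\nu<_{lx}\vec\xi$ fails.) *)

theory Defs
  imports Main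
begin

text \<open>The type 'k stands for the set of ordinals below the cardinal K, ordered by
  its well-order; K_card_type says that its order type is an uncountable cardinal.\<close>

definition K_card_type :: "'k::wellorder itself \<Rightarrow> bool" where
  "K_card_type _ \<longleftrightarrow>
     (natLeq, card_of (UNIV :: 'k set)) \<in> ordLess \<and>
     (\<forall>x::'k. (card_of {y. y < x}, card_of (UNIV :: 'k set)) \<in> ordLess)"

definition kzero :: "'k::wellorder" where "kzero = (LEAST x. True)"
definition kone :: "'k::wellorder" where "kone = (LEAST x. kzero < x)"

definition kadd :: "'k::wellorder \<Rightarrow> 'k \<Rightarrow> 'k" where
  "kadd a b = (THE c. \<exists>f. bij_betw f {..<b} {a..<c} \<and> strict_mono_on {..<b} f)"

text \<open>C [(e_m,a_m),...,(e_0,a_0)] denotes base^e_m * a_m + ... + base^e_0 * a_0.\<close>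
datatype 'c cnf = C "('c cnf \<times> 'c) list"

fun cnf_less :: "('c \<Rightarrow> 'c \<Rightarrow> bool) \<Rightarrow> 'c cnf \<Rightarrow> 'c cnf \<Rightarrow> bool" where
  "cnf_less lc (C []) (C []) = False"
| "cnf_less lc (C []) (C (_ # _)) = True"
| "cnf_less lc (C (_ # _)) (C []) = False"
| "cnf_less lc (C ((e,a) # xs)) (C ((f,b) # ys)) =
     (cnf_less lc e f \<or> (e = f \<and> (lc a b \<or> (a = b \<and> cnf_less lc (C xs) (C ys)))))"

fun cnf_wf :: "('c \<Rightarrow> bool) \<Rightarrow> ('c \<Rightarrow> 'c \<Rightarrow> bool) \<Rightarrow> 'c cnf \<Rightarrow> bool" where
  "cnf_wf vc lc (C xs) =
     ((\<forall>p \<in> set xs. cnf_wf vc lc (fst p) \<and> vc (snd p)) \<and>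
      sorted_wrt (\<lambda>p q. cnf_less lc (fst q) (fst p)) xs)"

definition cnf_add :: "('c \<Rightarrow> 'c \<Rightarrow> 'c) \<Rightarrow> ('c \<Rightarrow> 'c \<Rightarrow> bool) \<Rightarrow> 'c cnf \<Rightarrow> 'c cnf \<Rightarrow> 'c cnf" where
  "cnf_add ac lc x y = (case (x, y) of (C xs, C ys) \<Rightarrow>
     (case ys of [] \<Rightarrow> C xs
      | (f, b) # ys' \<Rightarrow>
          (let hi = takeWhile (\<lambda>p. cnf_less lc f (fst p)) xs;
               rest = dropWhile (\<lambda>p. cnf_less lc f (fst p)) xs
           in if rest \<noteq> [] \<and> fst (hd rest) = f
              then C (hi @ (f, ac (snd (hd rest)) b) # ys')
              else C (hi @ (f, b) # ys'))))"

section \<open>Level 1: ordinals below Lambda = epsilon_(K+1), in base-K Cantor normal form\<close>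

type_synonym 'k ord1 = "'k cnf"

definition less1 :: "'k::wellorder ord1 \<Rightarrow> 'k ord1 \<Rightarrow> bool" where
  "less1 = cnf_less (<)"
definition wf1 :: "'k::wellorder ord1 \<Rightarrow> bool" where
  "wf1 = cnf_wf (\<lambda>c. c \<noteq> kzero) (<)"
definition add1 :: "'k::wellorder ord1 \<Rightarrow> 'k ord1 \<Rightarrow> 'k ord1" where
  "add1 = cnf_add kadd (<)"
definition zero1 :: "'k::wellorder ord1" where "zero1 = C []"
definition one1 :: "'k::wellorder ord1" where "one1 = C [(C [], kone)]"

section \<open>Level 2: ordinals below epsilon_(K+2), in base-Lambda Cantor normal form\<close>

type_synonym 'k ord2 = "'k cnf cnf"

definition less2 :: "'k::wellorder ord2 \<Rightarrow> 'k ord2 \<Rightarrow> bool" where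
  "less2 = cnf_less less1"
definition le2 :: "'k::wellorder ord2 \<Rightarrow> 'k ord2 \<Rightarrow> bool" where
  "le2 x y \<longleftrightarrow> x = y \<or> less2 x y"
definition wf2 :: "'k::wellorder ord2 \<Rightarrow> bool" where
  "wf2 = cnf_wf (\<lambda>a. wf1 a \<and> a \<noteq> zero1) less1"
definition add2 :: "'k::wellorder ord2 \<Rightarrow> 'k ord2 \<Rightarrow> 'k ord2" where
  "add2 = cnf_add add1 less1"
definition zero2 :: "'k::wellorder ord2" where "zero2 = C []"
definition one2 :: "'k::wellorder ord2" where "one2 = C [(C [], one1)]"
definition succ2 :: "'k::wellorder ord2 \<Rightarrow> 'k ord2" where "succ2 x = add2 x one2"

definition powL :: "'k::wellorder ord2 \<Rightarrow> 'k ord2" where "powL x = C [(x, one1)]"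

definition LamT :: "nat \<Rightarrow> 'k::wellorder ord2 \<Rightarrow> 'k ord2" where
  "LamT j x = (powL ^^ j) x"

definition he :: "'k::wellorder ord2 \<Rightarrow> 'k ord2" where
  "he x = (if x = zero2 \<or> x = one2 then x else (case x of C xs \<Rightarrow> fst (hd xs)))"

definition Tl :: "'k::wellorder ord2 \<Rightarrow> 'k ord2" where
  "Tl x = (if x = zero2 \<or> x = one2 then x else (case x of C xs \<Rightarrow> C [last xs]))"

section \<open>Sequences (xi_2, ..., xi_(N-1)), represented as functions on indices 2..N-1\<close>

definition irreducible :: "nat \<Rightarrow> (nat \<Rightarrow> 'k::wellorder ord2) \<Rightarrow> bool" where
  "irreducible N \<xi> \<longleftrightarrow>
     (\<forall>i j. 2 \<le> i \<and> i < N - 1 \<and> 0 < j \<and> i + j \<le> N - 1 \<longrightarrow>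
        \<xi> i \<noteq> zero2 \<longrightarrow> le2 (LamT j (succ2 (\<xi> (i + j)))) (Tl (\<xi> i)))"

definition ord_o :: "nat \<Rightarrow> (nat \<Rightarrow> 'k::wellorder ord2) \<Rightarrow> 'k ord2" where
  "ord_o N \<xi> = foldl (\<lambda>s i. if \<xi> i = zero2 then s else add2 s (LamT (i - 1) (succ2 (\<xi> i))))
                 zero2 [2..<N]"

definition lx_less :: "nat \<Rightarrow> (nat \<Rightarrow> 'k::wellorder ord2) \<Rightarrow> (nat \<Rightarrow> 'k ord2) \<Rightarrow> bool" where
  "lx_less N \<nu> \<xi> \<longleftrightarrow>
     (\<exists>i \<in> {2..<N}. \<nu> i \<noteq> \<xi> i) \<and>
     (let i = (LEAST i. 2 \<le> i \<and> i < N \<and> \<nu> i \<noteq> \<xi> i) in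
       (\<exists>k \<in> {i..<N}. \<xi> k \<noteq> zero2) \<and>
       (let k1 = (LEAST k. i \<le> k \<and> k < N \<and> \<xi> k \<noteq> zero2) in
         (\<forall>k \<in> {i..<N}. \<nu> k = zero2) \<or>
         (let k0 = (LEAST k. i \<le> k \<and> k < N \<and> \<nu> k \<noteq> zero2) in
           (i = k0 \<and> k0 < k1 \<and> le2 ((he ^^ (k1 - i)) (\<nu> i)) (\<xi> k1)) \<or>
           (k1 \<le> k0 \<and> k1 = i \<and> less2 (\<nu> k0) ((he ^^ (k0 - i)) (\<xi> i))))))"

end

theory Submission
  imports Defs
begin

text \<open>For irreducible \<open>\<xi>\<close>, \<open>o(\<xi>)\<close> is literally the Cantor normal form
  \<open>\<Lambda>^E(i\<^sub>1) + ... + \<Lambda>^E(i\<^sub>m)\<close> over the indices with \<open>\<xi>(i) \<noteq> 0\<close>, where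
  \<open>E(i) = \<Lambda>_(i-2)(\<xi>(i) + 1)\<close>: the exponents strictly decrease, because irreducibility
  gives \<open>\<Lambda>_(i'-i)(\<xi>(i') + 1) \<le> Tl(\<xi>(i)) \<le> \<xi>(i)\<close> for \<open>i < i'\<close>.
  So \<open>o(\<nu>) < o(\<xi>)\<close> is a lexicographic comparison of exponent lists: the terms below the
  first index \<open>i\<close> where \<open>\<nu>\<close> and \<open>\<xi>\<close> differ cancel, and only the first exponents
  from \<open>i\<close> on, \<open>E\<^sub>\<nu>(k\<^sub>0)\<close> and \<open>E\<^sub>\<xi>(k\<^sub>1)\<close>, need to be compared.
  In case (a), iterating \<open>he(x) < y \<Longrightarrow> x + 1 < \<Lambda>^y\<close> turns
  \<open>he^(k\<^sub>1-i)(\<nu>(i)) \<le> \<xi>(k\<^sub>1)\<close> into \<open>\<nu>(i) + 1 < \<Lambda>_(k\<^sub>1-i)(\<xi>(k\<^sub>1) + 1)\<close>;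
  in case (b), iterating \<open>\<nu> < he(x) \<Longrightarrow> \<Lambda>^(\<nu>+1) \<le> x\<close> turns
  \<open>\<nu>(k\<^sub>0) < he^(k\<^sub>0-i)(\<xi>(i))\<close> into \<open>\<Lambda>_(k\<^sub>0-i)(\<nu>(k\<^sub>0) + 1) \<le> \<xi>(i)\<close>.
  Applying the monotone map \<open>\<Lambda>_(i-2)\<close> to either inequality compares the exponents.\<close>

lemma ex_greater_if_K_card_type:
  assumes "K_card_type TYPE('k::wellorder)"
  shows "\<exists>y. (x::'k) < y"
proof (rule ccontr)
  assume "\<not> ?thesis"
  then have UNIV_eq: "(UNIV::'k set) = {y. y < x} \<union> {x}"
    by (auto simp: not_less order.order_iff_strict)
  have inf: "(natLeq, card_of (UNIV::'k set)) \<in> ordLess"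
    and below: "(card_of {y. y < x}, card_of (UNIV::'k set)) \<in> ordLess"
    using assms by (auto simp: K_card_type_def)
  have "(card_of {x}, natLeq) \<in> ordLess"
    using finite_iff_ordLess_natLeq by blast
  then have single: "(card_of {x}, card_of (UNIV::'k set)) \<in> ordLess"
    using inf ordLess_transitive by blast
  have "\<not> finite (UNIV::'k set)"
    using inf infinite_iff_natLeq_ordLeq ordLess_imp_ordLeq by blast
  then have "(card_of ({y. y < x} \<union> {x}), card_of (UNIV::'k set)) \<in> ordLess"
    using card_of_Un_ordLess_infinite below single by blast
  then have "(card_of (UNIV::'k set), card_of (UNIV::'k set)) \<in> ordLess"
    using UNIV_eq by simp
  then show False
    using ordLess_irreflexive by blast
qed

definition ksucc :: "'k::wellorder \<Rightarrow> 'k" where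
  "ksucc x = (LEAST y. x < y)"

lemma ksucc_greater: "K_card_type TYPE('k::wellorder) \<Longrightarrow> (x::'k) < ksucc x"
  unfolding ksucc_def using ex_greater_if_K_card_type by (metis LeastI)

lemma ksucc_least: "(x::'k::wellorder) < y \<Longrightarrow> ksucc x \<le> y"
  unfolding ksucc_def by (rule Least_le)

lemma kzero_least: "kzero \<le> (x::'k::wellorder)"
  unfolding kzero_def by (rule Least_le) simp

lemma kone_eq_ksucc_kzero: "(kone::'k::wellorder) = ksucc kzero"
  unfolding kone_def ksucc_def ..

lemma kone_le_if_nonzero: "(x::'k::wellorder) \<noteq> kzero \<Longrightarrow> kone \<le> x"
  unfolding kone_eq_ksucc_kzero using kzero_least ksucc_least
  by (metis order.not_eq_order_implies_strict)

lemma lessThan_kone: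
  assumes "K_card_type TYPE('k::wellorder)"
  shows "{..<(kone::'k)} = {kzero}"
proof -
  have "kzero < (kone::'k)"
    unfolding kone_eq_ksucc_kzero by (rule ksucc_greater[OF assms])
  then show ?thesis
    by (auto simp: not_le[symmetric]) (metis kone_le_if_nonzero)
qed

lemma kadd_kone:
  assumes K: "K_card_type TYPE('k::wellorder)"
  shows "kadd (x::'k) kone = ksucc x"
  unfolding kadd_def lessThan_kone[OF K]
proof (rule the_equality)
  have "{x..<ksucc x} = {x}"
    using ksucc_greater[OF K, of x] ksucc_least[of x]
    by (auto simp: not_le[symmetric]) (meson leD order_le_less)
  then show "\<exists>f. bij_betw f {kzero} {x..<ksucc x} \<and> strict_mono_on {kzero} f"
    by (intro exI[of _ "\<lambda>_. x"]) (auto simp: bij_betw_def strict_mono_on_def)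
next
  fix c
  assume "\<exists>f. bij_betw f {kzero::'k} {x..<c} \<and> strict_mono_on {kzero} f"
  then obtain f :: "'k \<Rightarrow> 'k" where "bij_betw f {kzero} {x..<c}"
    by blast
  then have interval: "{x..<c} = {f kzero}"
    by (auto simp: bij_betw_def)
  then have "x < c"
    by (metis atLeastLessThan_empty_iff insert_not_empty not_le)
  then have "f kzero = x"
    using interval by (metis atLeastLessThan_iff order_refl singletonD)
  show "c = ksucc x"
  proof (rule antisym)
    show "ksucc x \<le> c"
      using \<open>x < c\<close> ksucc_least by blast
    show "c \<le> ksucc x"
    proof (rule ccontr)
      assume "\<not> c \<le> ksucc x"
      then have "ksucc x \<in> {x..<c}"
        using ksucc_greater[OF K, of x] by auto
      then show False
        using interval \<open>f kzero = x\<close> ksucc_greater[OF K, of x] by auto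
    qed
  qed
qed

section \<open>Cantor normal forms over an arbitrary coefficient order\<close>

lemma cnf_less_Nil_right [simp]: "\<not> cnf_less lc x (C [])"
  by (cases x rule: cnf.exhaust, rename_tac xs, case_tac xs) auto

lemma cnf_less_Nil_left: "cnf_less lc (C []) y \<longleftrightarrow> y \<noteq> C []"
  by (cases y rule: cnf.exhaust, rename_tac ys, case_tac ys) auto

lemma cnf_less_irrefl:
  assumes "\<And>a. \<not> lc a a"
  shows "\<not> cnf_less lc x x"
proof -
  have "(\<forall>a. \<not> lc' a a) \<Longrightarrow> x = y \<Longrightarrow> \<not> cnf_less lc' x y" for lc' x y
    by (induction lc' x y rule: cnf_less.induct) auto
  with assms show ?thesis by blast
qed

lemma cnf_less_trans:
  assumes "\<And>a b c. lc a b \<Longrightarrow> lc b c \<Longrightarrow> lc a c"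
    and "cnf_less lc x y" and "cnf_less lc y z"
  shows "cnf_less lc x z"
proof -
  have "(\<forall>a b c. lc' a b \<longrightarrow> lc' b c \<longrightarrow> lc' a c) \<Longrightarrow>
      cnf_less lc' x y \<Longrightarrow> cnf_less lc' y z \<Longrightarrow> cnf_less lc' x z" for lc' x y z
  proof (induction lc' x y arbitrary: z rule: cnf_less.induct)
    case 2
    then show ?case by (auto simp: cnf_less_Nil_left)
  next
    case (4 lc' e a xs f b ys)
    obtain zs where z: "z = C zs"
      by (cases z)
    show ?case
    proof (cases zs)
      case Nil
      then show ?thesis using 4 z by simp
    next
      case (Cons p zs')
      then show ?thesis using 4 z by (cases p) auto
    qed
  qed auto
  with assms show ?thesis by blast
qed

lemma cnf_less_append_same:
  assumes "\<And>a. \<not> lc a a"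
  shows "cnf_less lc (C (ps @ xs)) (C (ps @ ys)) \<longleftrightarrow> cnf_less lc (C xs) (C ys)"
proof (induction ps)
  case (Cons p ps)
  then show ?case
    using cnf_less_irrefl[of lc, OF assms] assms by (cases p) auto
qed simp

fun plus_one_terms :: "('c \<Rightarrow> 'c \<Rightarrow> 'c) \<Rightarrow> 'c \<Rightarrow> ('c cnf \<times> 'c) list \<Rightarrow> ('c cnf \<times> 'c) list" where
  "plus_one_terms ac one [] = [(C [], one)]"
| "plus_one_terms ac one ((e, a) # xs) =
     (if e = C [] then [(C [], ac a one)] else (e, a) # plus_one_terms ac one xs)"

lemma cnf_add_one: "cnf_add ac lc (C xs) (C [(C [], one)]) = C (plus_one_terms ac one xs)"
proof -
  have "(let hi = takeWhile (\<lambda>p. fst p \<noteq> C []) xs; rest = dropWhile (\<lambda>p. fst p \<noteq> C []) xs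
         in if rest \<noteq> [] \<and> fst (hd rest) = C [] then C (hi @ [(C [], ac (snd (hd rest)) one)])
            else C (hi @ [(C [], one)])) = C (plus_one_terms ac one xs)"
  proof (induction xs)
    case (Cons p xs)
    then show ?case by (cases p) (auto simp: Let_def split: if_splits)
  qed simp
  then show ?thesis
    unfolding cnf_add_def by (simp add: cnf_less_Nil_left)
qed

lemma cnf_less_plus_one_terms:
  assumes "\<And>a. lc a (ac a one)" and "\<And>a. \<not> lc a a"
  shows "cnf_less lc (C xs) (C (plus_one_terms ac one xs))"
proof (induction xs)
  case (Cons p xs)
  then show ?case
    using assms cnf_less_irrefl[of lc, OF assms(2)] by (cases p) auto
qed simp

fun zero_exponent_last :: "('c cnf \<times> 'c) list \<Rightarrow> bool" where
  "zero_exponent_last [] = True"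
| "zero_exponent_last (p # xs) = ((fst p = C [] \<longrightarrow> xs = []) \<and> zero_exponent_last xs)"

lemma zero_exponent_last_if_sorted:
  "sorted_wrt (\<lambda>p q. cnf_less lc (fst q) (fst p)) xs \<Longrightarrow> zero_exponent_last xs"
proof (induction xs)
  case (Cons p xs)
  then show ?case by (cases xs) auto
qed simp

lemma plus_one_terms_le:
  assumes irrefl: "\<And>a. \<not> lc a a"
    and one_least: "\<And>b. vc b \<Longrightarrow> b = one \<or> lc one b"
    and succ_least: "\<And>a b. vc a \<Longrightarrow> vc b \<Longrightarrow> lc a b \<Longrightarrow> ac a one = b \<or> lc (ac a one) b"
  shows "zero_exponent_last xs \<Longrightarrow> zero_exponent_last ys
    \<Longrightarrow> \<forall>p\<in>set xs. vc (snd p) \<Longrightarrow> \<forall>p\<in>set ys. vc (snd p)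
    \<Longrightarrow> cnf_less lc (C xs) (C ys)
    \<Longrightarrow> plus_one_terms ac one xs = ys \<or> cnf_less lc (C (plus_one_terms ac one xs)) (C ys)"
proof (induction xs arbitrary: ys)
  case Nil
  then obtain f b ys' where ys: "ys = (f, b) # ys'"
    by (cases ys) (auto simp: cnf_less_Nil_left)
  show ?case
  proof (cases "f = C []")
    case True
    then have "ys' = []" using Nil ys by simp
    then show ?thesis using one_least[of b] Nil ys True by auto
  next
    case False
    then show ?thesis using ys by (simp add: cnf_less_Nil_left)
  qed
next
  case (Cons p xs)
  obtain e a where p: "p = (e, a)"
    by (cases p)
  from Cons.prems obtain f b ys' where ys: "ys = (f, b) # ys'"
    by (cases ys) auto
  have cnf_irrefl: "\<And>x. \<not> cnf_less lc x x"
    using cnf_less_irrefl[of lc, OF irrefl] by blast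
  show ?case
  proof (cases "e = C []")
    case True
    then have xs: "xs = []" using Cons.prems p by simp
    show ?thesis
    proof (cases "f = C []")
      case True
      then have "ys' = []" using Cons.prems ys by simp
      moreover have "lc a b"
        using Cons.prems p ys \<open>ys' = []\<close> xs \<open>e = C []\<close> True irrefl by auto
      ultimately show ?thesis
        using succ_least[of a b] Cons.prems p ys xs \<open>e = C []\<close> True cnf_irrefl by auto
    next
      case False
      then show ?thesis using p ys True by (simp add: cnf_less_Nil_left)
    qed
  next
    case False
    have "cnf_less lc (C xs) (C ys') \<Longrightarrow>
        plus_one_terms ac one xs = ys' \<or> cnf_less lc (C (plus_one_terms ac one xs)) (C ys')"
      using Cons.IH Cons.prems p ys by auto
    then show ?thesis
      using Cons.prems False p ys cnf_irrefl by auto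
  qed
qed

lemma less1_irrefl: "\<not> less1 x x"
  unfolding less1_def by (rule cnf_less_irrefl) auto

lemma less1_trans: "less1 x y \<Longrightarrow> less1 y z \<Longrightarrow> less1 x z"
  unfolding less1_def by (rule cnf_less_trans) auto

lemma add1_one1: "add1 (C xs) one1 = C (plus_one_terms kadd kone xs)"
  unfolding add1_def one1_def by (rule cnf_add_one)

lemma wf1_C:
  "wf1 (C xs) \<longleftrightarrow> (\<forall>p\<in>set xs. wf1 (fst p) \<and> snd p \<noteq> kzero) \<and>
     sorted_wrt (\<lambda>p q. less1 (fst q) (fst p)) xs"
  unfolding wf1_def less1_def by simp

context
  fixes dummy :: "'k::wellorder itself"
  assumes K: "K_card_type TYPE('k)"
begin

lemma less1_add1_one1: "less1 (a::'k ord1) (add1 a one1)"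
  by (cases a) (auto simp: add1_one1 less1_def kadd_kone[OF K] ksucc_greater[OF K]
      intro: cnf_less_plus_one_terms)

lemma one1_le: "wf1 (b::'k ord1) \<Longrightarrow> b \<noteq> zero1 \<Longrightarrow> b = one1 \<or> less1 one1 b"
proof -
  assume "wf1 b" and "b \<noteq> zero1"
  then obtain e c rest where b: "b = C ((e, c) # rest)" and "c \<noteq> kzero"
    unfolding zero1_def by (cases b rule: cnf.exhaust, rename_tac xs, case_tac xs) (auto simp: wf1_C)
  then have "c = kone \<or> kone < c"
    using kone_le_if_nonzero by (auto simp: order.order_iff_strict)
  then show ?thesis
    unfolding b one1_def less1_def by (cases rest) (auto simp: cnf_less_Nil_left)
qed

lemma add1_one1_le:
  assumes "wf1 (a::'k ord1)" and "wf1 b" and "less1 a b"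
  shows "add1 a one1 = b \<or> less1 (add1 a one1) b"
proof -
  obtain xs ys where a: "a = C xs" and b: "b = C ys"
    by (cases a, cases b)
  have "plus_one_terms kadd kone xs = ys \<or>
      cnf_less (<) (C (plus_one_terms kadd kone xs)) (C ys)"
  proof (rule plus_one_terms_le[where vc = "\<lambda>c. c \<noteq> kzero"])
    show "zero_exponent_last xs" "zero_exponent_last ys"
      using assms a b by (auto simp: wf1_C less1_def intro: zero_exponent_last_if_sorted)
    show "\<forall>p\<in>set xs. snd p \<noteq> kzero" "\<forall>p\<in>set ys. snd p \<noteq> kzero"
      using assms a b by (auto simp: wf1_C)
    show "cnf_less (<) (C xs) (C ys)"
      using assms a b by (simp add: less1_def)
    show "\<And>b::'k. b \<noteq> kzero \<Longrightarrow> b = kone \<or> kone < b"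
      using kone_le_if_nonzero by (auto simp: order.order_iff_strict)
    show "\<And>a b::'k. a \<noteq> kzero \<Longrightarrow> b \<noteq> kzero \<Longrightarrow> a < b \<Longrightarrow> kadd a kone = b \<or> kadd a kone < b"
      using ksucc_least by (auto simp: kadd_kone[OF K] order.order_iff_strict)
  qed auto
  then show ?thesis
    unfolding a b add1_one1 less1_def by auto
qed

end

lemma less2_trans: "less2 x y \<Longrightarrow> less2 y z \<Longrightarrow> less2 x z"
  unfolding less2_def by (rule cnf_less_trans) (auto intro: less1_trans)

lemma le_less2_trans: "le2 x y \<Longrightarrow> less2 y z \<Longrightarrow> less2 x z"
  unfolding le2_def using less2_trans by blast

lemma succ2_C: "succ2 (C xs) = C (plus_one_terms add1 one1 xs)"
  unfolding succ2_def add2_def one2_def by (rule cnf_add_one)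

lemma wf2_C:
  "wf2 (C xs) \<longleftrightarrow> (\<forall>p\<in>set xs. wf2 (fst p) \<and> wf1 (snd p) \<and> snd p \<noteq> zero1) \<and>
     sorted_wrt (\<lambda>p q. less2 (fst q) (fst p)) xs"
  unfolding wf2_def less2_def by simp

lemma less2_Nil_left: "less2 (C []) y \<longleftrightarrow> y \<noteq> C []"
  unfolding less2_def by (rule cnf_less_Nil_left)

lemma less2_Nil_right [simp]: "\<not> less2 x (C [])"
  unfolding less2_def by simp

lemma less2_C_Cons_iff:
  "less2 (C ((e, a) # xs)) (C ((f, b) # ys)) \<longleftrightarrow>
     less2 e f \<or> e = f \<and> (less1 a b \<or> a = b \<and> less2 (C xs) (C ys))"
  unfolding less2_def less1_def by simp

lemma less2_C_append_same: "less2 (C (ps @ xs)) (C (ps @ ys)) \<longleftrightarrow> less2 (C xs) (C ys)"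
  unfolding less2_def by (rule cnf_less_append_same) (simp add: less1_irrefl)

lemma LamT_0 [simp]: "LamT 0 x = x"
  unfolding LamT_def by simp

lemma LamT_Suc: "LamT (Suc n) x = powL (LamT n x)"
  unfolding LamT_def by simp

lemma LamT_LamT: "LamT m (LamT n x) = LamT (m + n) x"
  unfolding LamT_def by (simp add: funpow_add)

lemma LamT_less2_mono: "less2 x y \<Longrightarrow> less2 (LamT n x) (LamT n y)"
  by (induction n) (auto simp: LamT_Suc powL_def less2_def)

lemma less2_powL_if_exponent_less: "less2 e y \<Longrightarrow> less2 (C ((e, a) # rest)) (powL y)"
  unfolding powL_def less2_def by simp

lemma he_C_Cons: "C ((e, a) # rest) \<noteq> one2 \<Longrightarrow> he (C ((e, a) # rest)) = e"
  unfolding he_def zero2_def by simp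

lemma less2_powL_if_he_less: "less2 (he x) y \<Longrightarrow> less2 x (powL y)"
proof -
  assume he_less: "less2 (he x) y"
  obtain xs where x: "x = C xs"
    by (cases x)
  show ?thesis
  proof (cases xs)
    case Nil
    then show ?thesis using x by (simp add: powL_def less2_Nil_left)
  next
    case (Cons p rest)
    obtain e a where p: "p = (e, a)"
      by (cases p)
    show ?thesis
    proof (cases "x = one2")
      case True
      then have "e = C []" and "y \<noteq> C []"
        using x Cons p he_less unfolding one2_def by auto
      then show ?thesis
        using x Cons p less2_powL_if_exponent_less less2_Nil_left by metis
    next
      case False
      then show ?thesis
        using x Cons p he_less he_C_Cons less2_powL_if_exponent_less by metis
    qed
  qed
qed

lemma succ2_less2_powL_if_he_less: "less2 (he x) y \<Longrightarrow> less2 (succ2 x) (powL y)"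
proof -
  assume he_less: "less2 (he x) y"
  then have "y \<noteq> C []" by auto
  obtain xs where x: "x = C xs"
    by (cases x)
  show ?thesis
  proof (cases xs)
    case Nil
    then show ?thesis
      using x \<open>y \<noteq> C []\<close> by (simp add: succ2_C less2_powL_if_exponent_less less2_Nil_left)
  next
    case (Cons p rest)
    obtain e a where p: "p = (e, a)"
      by (cases p)
    show ?thesis
    proof (cases "e = C []")
      case True
      then show ?thesis
        using x Cons p \<open>y \<noteq> C []\<close>
        by (simp add: succ2_C less2_powL_if_exponent_less less2_Nil_left)
    next
      case False
      then have "x \<noteq> one2"
        using x Cons p unfolding one2_def by simp
      then have "he x = e"
        using x Cons p he_C_Cons by simp
      then show ?thesis
        using x Cons p False he_less by (simp add: succ2_C less2_powL_if_exponent_less)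
    qed
  qed
qed

lemma funpow_he_zero_or_one: "x = zero2 \<or> x = one2 \<Longrightarrow> (he ^^ n) x = x"
  by (induction n) (auto simp: he_def)

lemma funpow_Suc_inner: "(f ^^ Suc n) x = (f ^^ n) (f x)"
  by (simp add: funpow_Suc_right del: funpow.simps)

lemma wf2_he: "wf2 x \<Longrightarrow> wf2 (he x)"
proof -
  assume wf: "wf2 x"
  obtain xs where x: "x = C xs"
    by (cases x)
  show ?thesis
  proof (cases "x = zero2 \<or> x = one2")
    case True
    then show ?thesis using wf by (auto simp: he_def)
  next
    case False
    then obtain p rest where "xs = p # rest"
      using x unfolding zero2_def by (cases xs) auto
    then show ?thesis
      using x False wf by (auto simp: he_def wf2_C)
  qed
qed

lemma Tl_le2: "wf2 x \<Longrightarrow> le2 (Tl x) x"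
proof -
  assume wf: "wf2 x"
  obtain xs where x: "x = C xs"
    by (cases x)
  show ?thesis
  proof (cases "x = zero2 \<or> x = one2")
    case True
    then show ?thesis by (auto simp: Tl_def le2_def)
  next
    case False
    then obtain p rest where xs: "xs = p # rest"
      using x unfolding zero2_def by (cases xs) auto
    show ?thesis
    proof (cases rest)
      case Nil
      then show ?thesis using x False xs by (simp add: Tl_def le2_def)
    next
      case (Cons q rest')
      then have "last xs \<in> set rest" using xs by simp
      then have "less2 (fst (last xs)) (fst p)"
        using wf x xs by (auto simp: wf2_C)
      then have "less2 (C [last xs]) (C xs)"
        using xs by (cases "last xs", cases p) (simp add: less2_C_Cons_iff)
      then show ?thesis
        using x False by (simp add: Tl_def le2_def)
    qed
  qed
qed

context
  fixes dummy :: "'k::wellorder itself"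
  assumes K: "K_card_type TYPE('k)"
begin

lemma less2_succ2: "less2 (x::'k ord2) (succ2 x)"
  by (cases x) (auto simp: succ2_C less2_def less1_add1_one1[OF K] less1_irrefl
      intro: cnf_less_plus_one_terms)

lemma succ2_le2:
  assumes "wf2 (a::'k ord2)" and "wf2 b" and "less2 a b"
  shows "le2 (succ2 a) b"
proof -
  obtain xs ys where a: "a = C xs" and b: "b = C ys"
    by (cases a, cases b)
  have "plus_one_terms add1 one1 xs = ys \<or>
      cnf_less less1 (C (plus_one_terms add1 one1 xs)) (C ys)"
  proof (rule plus_one_terms_le[where vc = "\<lambda>c. wf1 c \<and> c \<noteq> zero1"])
    show "zero_exponent_last xs" "zero_exponent_last ys"
      using assms a b by (auto simp: wf2_C less2_def intro: zero_exponent_last_if_sorted)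
    show "\<forall>p\<in>set xs. wf1 (snd p) \<and> snd p \<noteq> zero1" "\<forall>p\<in>set ys. wf1 (snd p) \<and> snd p \<noteq> zero1"
      using assms a b by (auto simp: wf2_C)
    show "cnf_less less1 (C xs) (C ys)"
      using assms a b by (simp add: less2_def)
    show "\<And>b::'k ord1. wf1 b \<and> b \<noteq> zero1 \<Longrightarrow> b = one1 \<or> less1 one1 b"
      using one1_le[OF K] by blast
    show "\<And>a b::'k ord1. wf1 a \<and> a \<noteq> zero1 \<Longrightarrow> wf1 b \<and> b \<noteq> zero1 \<Longrightarrow> less1 a b \<Longrightarrow>
        add1 a one1 = b \<or> less1 (add1 a one1) b"
      using add1_one1_le[OF K] by blast
  qed (auto simp: less1_irrefl)
  then show ?thesis
    unfolding a b succ2_C less2_def le2_def by auto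
qed

lemma zero2_if_less2_one2: "wf2 (y::'k ord2) \<Longrightarrow> less2 y one2 \<Longrightarrow> y = zero2"
proof -
  assume wf: "wf2 y" and less_one: "less2 y one2"
  obtain xs where y: "y = C xs"
    by (cases y)
  show ?thesis
  proof (cases xs)
    case Nil
    then show ?thesis using y by (simp add: zero2_def)
  next
    case (Cons p rest)
    obtain e a where p: "p = (e, a)"
      by (cases p)
    have "less1 a one1"
      using less_one y Cons p unfolding less2_def one2_def by auto
    moreover have "a = one1 \<or> less1 one1 a"
      using wf y Cons p one1_le[OF K] by (auto simp: wf2_C)
    ultimately show ?thesis
      using less1_irrefl less1_trans by blast
  qed
qed

lemma less2_LamT_succ2_if_funpow_he_le:
  "le2 ((he ^^ d) x) \<xi> \<Longrightarrow> less2 (x::'k ord2) (LamT d (succ2 \<xi>))"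
proof (induction d arbitrary: x)
  case 0
  then show ?case by (simp add: le_less2_trans[OF _ less2_succ2])
next
  case (Suc d)
  have "le2 ((he ^^ d) (he x)) \<xi>"
    using Suc.prems by (simp only: funpow_Suc_inner)
  then have "less2 (he x) (LamT d (succ2 \<xi>))"
    by (rule Suc.IH)
  then show ?case by (simp add: LamT_Suc less2_powL_if_he_less)
qed

lemma LamT_succ2_le2_if_less_funpow_he:
  "wf2 (x::'k ord2) \<Longrightarrow> wf2 \<nu> \<Longrightarrow> \<nu> \<noteq> zero2 \<Longrightarrow> less2 \<nu> ((he ^^ d) x)
   \<Longrightarrow> le2 (LamT d (succ2 \<nu>)) x"
proof (induction d arbitrary: x)
  case 0
  then show ?case using succ2_le2 by simp
next
  case (Suc d)
  have "less2 \<nu> ((he ^^ d) (he x))"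
    using Suc.prems by (simp only: funpow_Suc_inner)
  then have "le2 (LamT d (succ2 \<nu>)) (he x)"
    using Suc.IH[of "he x"] Suc.prems wf2_he by blast
  have "x \<noteq> zero2 \<and> x \<noteq> one2"
  proof (rule ccontr)
    assume "\<not> (x \<noteq> zero2 \<and> x \<noteq> one2)"
    moreover from this have "less2 \<nu> x"
      using Suc.prems funpow_he_zero_or_one by metis
    ultimately show False
      using Suc.prems zero2_if_less2_one2 by (auto simp: zero2_def)
  qed
  then obtain e a rest where x: "x = C ((e, a) # rest)"
    by (metis cnf.exhaust list.exhaust surj_pair zero2_def)
  then have "he x = e"
    using \<open>x \<noteq> zero2 \<and> x \<noteq> one2\<close> he_C_Cons by metis
  have "a = one1 \<or> less1 one1 a"
    using Suc.prems x one1_le[OF K] by (auto simp: wf2_C)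
  then have "le2 (C [(LamT d (succ2 \<nu>), one1)]) (C ((e, a) # rest))"
    using \<open>le2 (LamT d (succ2 \<nu>)) (he x)\<close> \<open>he x = e\<close>
    by (cases rest) (auto simp: le2_def less2_def less1_irrefl cnf_less_Nil_left)
  then show ?case
    using x by (simp add: LamT_Suc powL_def)
qed

end

section \<open>The ordinal \<open>o(\<xi>)\<close> as a normal form\<close>

definition o_exponent :: "(nat \<Rightarrow> 'k::wellorder ord2) \<Rightarrow> nat \<Rightarrow> 'k ord2" where
  "o_exponent \<xi> i = LamT (i - 2) (succ2 (\<xi> i))"

definition o_terms :: "(nat \<Rightarrow> 'k::wellorder ord2) \<Rightarrow> nat list \<Rightarrow> ('k ord1 cnf \<times> 'k ord1) list" where
  "o_terms \<xi> is = map (\<lambda>i. (o_exponent \<xi> i, one1)) (filter (\<lambda>i. \<xi> i \<noteq> zero2) is)"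

lemma o_terms_cong: "(\<And>j. j \<in> set is \<Longrightarrow> \<nu> j = \<xi> j) \<Longrightarrow> o_terms \<nu> is = o_terms \<xi> is"
  unfolding o_terms_def o_exponent_def by (induction "is") auto

lemma add2_C_snoc:
  "(\<forall>p\<in>set ps. less2 e (fst p)) \<Longrightarrow> add2 (C ps) (C [(e, a)]) = C (ps @ [(e, a)])"
  unfolding add2_def cnf_add_def
  by (simp add: takeWhile_eq_all_conv dropWhile_eq_Nil_conv less2_def)

lemma filter_upt_eq_Least_Cons:
  assumes "\<exists>k. i \<le> k \<and> k < n \<and> P k"
  defines "k \<equiv> LEAST k. i \<le> k \<and> k < n \<and> P k"
  shows "filter P [i..<n] = k # filter P [Suc k..<n]"
proof -
  have k: "i \<le> k" "k < n" "P k"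
    using LeastI_ex[OF assms(1)] unfolding k_def by auto
  have "\<not> P j" if "i \<le> j" "j < k" for j
    using not_less_Least[of j] that k unfolding k_def by fastforce
  then have "filter P [i..<k] = []"
    by (auto simp: filter_empty_conv)
  moreover have "[i..<n] = [i..<k] @ k # [Suc k..<n]"
    using k upt_add_eq_append[of i k "n - k"] upt_conv_Cons by simp
  ultimately show ?thesis
    using k by simp
qed

context
  fixes dummy :: "'k::wellorder itself"
  assumes K: "K_card_type TYPE('k)"
begin

lemma o_exponent_decreasing:
  assumes irr: "irreducible N (\<xi> :: nat \<Rightarrow> 'k ord2)" and wf: "\<forall>i\<in>{2..<N}. wf2 (\<xi> i)"
    and "2 \<le> i" "i < i'" "i' < N" "\<xi> i \<noteq> zero2"
  shows "less2 (o_exponent \<xi> i') (o_exponent \<xi> i)"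
proof -
  have "2 \<le> i \<and> i < N - 1 \<and> 0 < i' - i \<and> i + (i' - i) \<le> N - 1"
    using assms(3-5) by auto
  then have "le2 (LamT (i' - i) (succ2 (\<xi> (i + (i' - i))))) (Tl (\<xi> i))"
    using irr assms(6) unfolding irreducible_def by blast
  then have "le2 (LamT (i' - i) (succ2 (\<xi> i'))) (Tl (\<xi> i))"
    using \<open>i < i'\<close> by simp
  moreover have "wf2 (\<xi> i)"
    using wf assms(3-5) by simp
  then have "less2 (Tl (\<xi> i)) (succ2 (\<xi> i))"
    using Tl_le2 le_less2_trans less2_succ2[OF K] by blast
  ultimately have "less2 (LamT (i' - i) (succ2 (\<xi> i'))) (succ2 (\<xi> i))"
    by (rule le_less2_trans)
  then have "less2 (LamT (i - 2) (LamT (i' - i) (succ2 (\<xi> i')))) (LamT (i - 2) (succ2 (\<xi> i)))"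
    by (rule LamT_less2_mono)
  moreover have "i - 2 + (i' - i) = i' - 2"
    using assms by simp
  ultimately show ?thesis
    unfolding o_exponent_def LamT_LamT by simp
qed

lemma ord_o_eq_C_o_terms:
  assumes irr: "irreducible N (\<xi> :: nat \<Rightarrow> 'k ord2)" and wf: "\<forall>i\<in>{2..<N}. wf2 (\<xi> i)"
  shows "ord_o N \<xi> = C (o_terms \<xi> [2..<N])"
proof -
  have "n \<le> N \<Longrightarrow> foldl (\<lambda>s i. if \<xi> i = zero2 then s else add2 s (LamT (i - 1) (succ2 (\<xi> i))))
      zero2 [2..<n] = C (o_terms \<xi> [2..<n])" for n
  proof (induction n)
    case 0
    then show ?case by (simp add: zero2_def o_terms_def)
  next
    case (Suc n)
    show ?case
    proof (cases "2 \<le> n \<and> \<xi> n \<noteq> zero2")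
      case False
      then show ?thesis using Suc by (auto simp: o_terms_def zero2_def)
    next
      case True
      then have "n - 1 = Suc (n - 2)"
        by arith
      then have "LamT (n - 1) (succ2 (\<xi> n)) = C [(o_exponent \<xi> n, one1)]"
        by (simp add: o_exponent_def powL_def LamT_Suc)
      moreover have "\<forall>p\<in>set (o_terms \<xi> [2..<n]). less2 (o_exponent \<xi> n) (fst p)"
        using o_exponent_decreasing[OF irr wf] Suc.prems by (auto simp: o_terms_def)
      ultimately show ?thesis
        using True Suc by (simp add: o_terms_def add2_C_snoc)
    qed
  qed
  then show ?thesis
    unfolding ord_o_def by simp
qed

end

definition lx_less_from :: "nat \<Rightarrow> (nat \<Rightarrow> 'k::wellorder ord2) \<Rightarrow> (nat \<Rightarrow> 'k ord2) \<Rightarrow> nat \<Rightarrow> bool" where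
  "lx_less_from N \<nu> \<xi> i \<longleftrightarrow>
     (\<exists>k \<in> {i..<N}. \<xi> k \<noteq> zero2) \<and>
     (let k1 = (LEAST k. i \<le> k \<and> k < N \<and> \<xi> k \<noteq> zero2) in
       (\<forall>k \<in> {i..<N}. \<nu> k = zero2) \<or>
       (let k0 = (LEAST k. i \<le> k \<and> k < N \<and> \<nu> k \<noteq> zero2) in
         (i = k0 \<and> k0 < k1 \<and> le2 ((he ^^ (k1 - i)) (\<nu> i)) (\<xi> k1)) \<or>
         (k1 \<le> k0 \<and> k1 = i \<and> less2 (\<nu> k0) ((he ^^ (k0 - i)) (\<xi> i)))))"

lemma lx_less_iff_lx_less_from:
  "lx_less N \<nu> \<xi> \<longleftrightarrow> (\<exists>i \<in> {2..<N}. \<nu> i \<noteq> \<xi> i) \<and>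
     lx_less_from N \<nu> \<xi> (LEAST i. 2 \<le> i \<and> i < N \<and> \<nu> i \<noteq> \<xi> i)"
  unfolding lx_less_def lx_less_from_def Let_def ..

context
  fixes dummy :: "'k::wellorder itself"
  assumes K: "K_card_type TYPE('k)"
begin

lemma o_exponent_less_if_he_iterate_le:
  assumes "2 \<le> i" "i < k" "le2 ((he ^^ (k - i)) (\<nu> i)) ((\<xi> :: nat \<Rightarrow> 'k ord2) k)"
  shows "less2 (o_exponent \<nu> i) (o_exponent \<xi> k)"
proof -
  obtain d where d: "k - i = Suc d"
    using assms(2) by (metis Suc_diff_Suc)
  then have "le2 ((he ^^ d) (he (\<nu> i))) (\<xi> k)"
    using assms(3) by (simp only: funpow_Suc_inner)
  then have "less2 (he (\<nu> i)) (LamT d (succ2 (\<xi> k)))"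
    by (rule less2_LamT_succ2_if_funpow_he_le[OF K])
  then have "less2 (succ2 (\<nu> i)) (LamT (k - i) (succ2 (\<xi> k)))"
    unfolding d LamT_Suc by (rule succ2_less2_powL_if_he_less)
  then have "less2 (LamT (i - 2) (succ2 (\<nu> i))) (LamT (i - 2 + (k - i)) (succ2 (\<xi> k)))"
    unfolding LamT_LamT[symmetric] by (rule LamT_less2_mono)
  then show ?thesis
    using assms(1,2) by (simp add: o_exponent_def)
qed

lemma o_exponent_less_if_less_he_iterate:
  assumes "2 \<le> i" "i \<le> k" "wf2 (\<xi> i)" "wf2 (\<nu> k)" "\<nu> k \<noteq> zero2"
    and "less2 (\<nu> k) ((he ^^ (k - i)) ((\<xi> :: nat \<Rightarrow> 'k ord2) i))"
  shows "less2 (o_exponent \<nu> k) (o_exponent \<xi> i)"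
proof -
  have "le2 (LamT (k - i) (succ2 (\<nu> k))) (\<xi> i)"
    using LamT_succ2_le2_if_less_funpow_he[OF K] assms(3-6) by blast
  then have "less2 (LamT (k - i) (succ2 (\<nu> k))) (succ2 (\<xi> i))"
    using le_less2_trans less2_succ2[OF K] by blast
  then have "less2 (LamT (i - 2 + (k - i)) (succ2 (\<nu> k))) (LamT (i - 2) (succ2 (\<xi> i)))"
    unfolding LamT_LamT[symmetric] by (rule LamT_less2_mono)
  then show ?thesis
    using assms(1,2) by (simp add: o_exponent_def)
qed

lemma o_terms_less_if_lx_less_from:
  assumes wf_\<nu>: "\<forall>i\<in>{2..<N}. wf2 (\<nu> i)" and wf_\<xi>: "\<forall>i\<in>{2..<N}. wf2 ((\<xi> :: nat \<Rightarrow> 'k ord2) i)"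
    and "2 \<le> i" and lx: "lx_less_from N \<nu> \<xi> i"
  shows "less2 (C (o_terms \<nu> [i..<N])) (C (o_terms \<xi> [i..<N]))"
proof -
  define k1 where "k1 = (LEAST k. i \<le> k \<and> k < N \<and> \<xi> k \<noteq> zero2)"
  define k0 where "k0 = (LEAST k. i \<le> k \<and> k < N \<and> \<nu> k \<noteq> zero2)"
  have ex1: "\<exists>k. i \<le> k \<and> k < N \<and> \<xi> k \<noteq> zero2"
    using lx unfolding lx_less_from_def by auto
  have k1: "i \<le> k1" "k1 < N"
    using LeastI_ex[OF ex1] unfolding k1_def by auto
  have \<xi>_terms: "o_terms \<xi> [i..<N] = (o_exponent \<xi> k1, one1) # o_terms \<xi> [Suc k1..<N]"
    using filter_upt_eq_Least_Cons[OF ex1] unfolding o_terms_def k1_def by simp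
  show ?thesis
  proof (cases "\<forall>k \<in> {i..<N}. \<nu> k = zero2")
    case True
    then show ?thesis
      using \<xi>_terms by (simp add: o_terms_def filter_empty_conv less2_Nil_left)
  next
    case False
    then have ex0: "\<exists>k. i \<le> k \<and> k < N \<and> \<nu> k \<noteq> zero2"
      by auto
    have k0: "i \<le> k0" "k0 < N" "\<nu> k0 \<noteq> zero2"
      using LeastI_ex[OF ex0] unfolding k0_def by auto
    have \<nu>_terms: "o_terms \<nu> [i..<N] = (o_exponent \<nu> k0, one1) # o_terms \<nu> [Suc k0..<N]"
      using filter_upt_eq_Least_Cons[OF ex0] unfolding o_terms_def k0_def by simp
    from lx False consider
        "i = k0" "k0 < k1" "le2 ((he ^^ (k1 - i)) (\<nu> i)) (\<xi> k1)"
      | "k1 = i" "less2 (\<nu> k0) ((he ^^ (k0 - i)) (\<xi> i))"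
      unfolding lx_less_from_def Let_def k0_def[symmetric] k1_def[symmetric] by blast
    then have "less2 (o_exponent \<nu> k0) (o_exponent \<xi> k1)"
    proof cases
      case 1
      then show ?thesis
        using o_exponent_less_if_he_iterate_le[of i k1 \<nu> \<xi>] \<open>2 \<le> i\<close> by simp
    next
      case 2
      moreover have "wf2 (\<xi> i)" "wf2 (\<nu> k0)"
        using \<open>2 \<le> i\<close> k0 k1 wf_\<nu> wf_\<xi> by auto
      ultimately show ?thesis
        using o_exponent_less_if_less_he_iterate[of i k0 \<xi> \<nu>] \<open>2 \<le> i\<close> k0 by simp
    qed
    then show ?thesis
      using \<nu>_terms \<xi>_terms by (simp add: less2_C_Cons_iff)
  qed
qed

end

theorem proposition2p15:
  fixes N :: nat and \<nu> \<xi> :: "nat \<Rightarrow> 'k::wellorder ord2"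
  assumes "N \<ge> 3"
    and "K_card_type TYPE('k)"
    and "\<forall>i \<in> {2..<N}. wf2 (\<nu> i)"
    and "\<forall>i \<in> {2..<N}. wf2 (\<xi> i)"
    and "irreducible N \<nu>"
    and "irreducible N \<xi>"
    and "lx_less N \<nu> \<xi>"
  shows "less2 (ord_o N \<nu>) (ord_o N \<xi>)"
proof -
  define i where "i = (LEAST i. 2 \<le> i \<and> i < N \<and> \<nu> i \<noteq> \<xi> i)"
  have ex: "\<exists>i. 2 \<le> i \<and> i < N \<and> \<nu> i \<noteq> \<xi> i"
    and lx: "lx_less_from N \<nu> \<xi> i"
    using assms(7) unfolding lx_less_iff_lx_less_from i_def by auto
  have i: "2 \<le> i" "i < N"
    using LeastI_ex[OF ex] unfolding i_def by auto
  have "\<nu> j = \<xi> j" if "2 \<le> j" "j < i" for j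
    using not_less_Least[of j] that i unfolding i_def by fastforce
  then have "o_terms \<nu> [2..<i] = o_terms \<xi> [2..<i]"
    by (intro o_terms_cong) auto
  moreover have "[2..<N] = [2..<i] @ [i..<N]"
    using i upt_add_eq_append[of 2 i "N - i"] by simp
  moreover have "less2 (C (o_terms \<nu> [i..<N])) (C (o_terms \<xi> [i..<N]))"
    using o_terms_less_if_lx_less_from[OF assms(2,3,4) i(1) lx] .
  ultimately show ?thesis
    using ord_o_eq_C_o_terms[OF assms(2)] assms(3-6)
    by (simp add: o_terms_def less2_C_append_same)
qed

end
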